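(* In any execution of $\mathcal{U}$, for every operation $o$, there is at most one execution of line 12 for $o$ that returns true. Equivalently: if line 12 is executed for $o$ and returns true at some time $T$, then every execution of line 12 for $o$ after time $T$ returns false.
   Context: Model: an asynchronous shared-memory system with possibly infinitely many processes, any of which may crash, communicating via atomic shared objects. A fetch-and-increment (F\&I) object stores an integer; F\&I$(C)$ atomically returns the current value and increments it. A generalized-compare-and-swap (GCAS) object $O$ stores a value and supports Read$(O)$ and GCAS$(c, O, v_1, v_2)$, which atomically does: if $c(\text{current value of } O, v_1)$ holds then set $O := v_2$ and return true, else return false. Tuples are compared componentwise for $=$; GCAS$(>, A, (t,-,-), v)$ succeeds iff the time field of $A$ is strictly greater than $t$. Implemented type $\mathcal{T} = (OP, RES, Q, \delta)$ with initial state $s_0$; a procedure $apply_{\mathcal{T}}(o,s)$ returns some $(s',r)$ with $(s,o,s',r)\in\delta$. $NULL$ is a value different from every response of $\mathcal{T}$, and $NOOP$ is a name different from every operation of $\mathcal{T}$. Algorithm $\mathcal{U}$: each process $p$ owns a GCAS object $H_p$ with fields $(time, response)$. Shared objects: F\&I object $C$, initially $1$; GCAS object $A$ with fields $(time, op, ptr)$, initially $(0, NOOP, h(NOOP))$, where $h(NOOP)$ is a pointer to an immutable location containing $(0,\perp)$; GCAS object $S$ with fields $(time, state, response, ptr)$, initially $(0, s_0, \perp, h(NOOP))$. Process $p$ performs operation $o$ by calling DoOp$(o)$: (1) DoOp$(o)$ invoked; (2) $t := $ F\&I$(C)$; (3) $H_p := (t, NULL)$; (4) while $H_p = (t, NULL)$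 do: (5) $(t^*, s^*, r^*, roptr^* ) := S$; (6) GCAS$(=, *roptr^*, (t^*, NULL), (t^*, r^* ))$; (7) GCAS$(>, A, (t,-,-), (t, o, \&H_p))$; (8) $(t', o', roptr') := A$; (9) $(\hat t, \hat r) := *roptr'$; (10) if $(\hat t,\hat r) = (t', NULL)$ then (11) $(s', r') := apply_{\mathcal{T}}(o', s^* )$; (12) GCAS$(=, S, (t^*,s^*,r^*,roptr^* ), (t', s', r', roptr'))$; (13) else GCAS$(=, A, (t', o', roptr'), (t, o, \&H_p))$; end while; (14) return $H_p.response$. Notation: an "operation" $o$ means one invocation of DoOp$(o)$ (or the initial $NOOP$). $p(o)$ is the process executing it; $t(o)$ is the value returned by its F\&I at line 2, or $\infty$ if line 2 has not been executed; $h(o)$ is $H_{p(o)}$. For $NOOP$: $t(NOOP)=0$ and $h(NOOP)$ is the immutable location containing $(0,\perp)$. "Line 12 is executed for $o$" means the new value written in that GCAS has the form $(t(o), -, r, h(o))$. *)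

theory Defs
  imports Main
begin

text \<open>Process identifiers have an arbitrary (possibly
infinite) type 'p. The implemented type T has operations 'op, responses 'r,
states 'q, transition relation delta and initial state s0.\<close>

text \<open>Pointers to H-registers: h(NOOP) (immutable location holding (0,Bot))
or the register H_p of process p.\<close>
datatype 'p ptr = HNoop | HP 'p

datatype 'r rv = NULL | Bot | Res 'r

datatype 'op opn = NOOP | Op 'op

text \<open>Local state of a process; lpc is the number of the next line to execute
(1 = idle, about to invoke DoOp).\<close>
record ('p, 'op, 'q, 'r) lstate =
  lpc :: nat
  lop :: 'op
  lt :: nat
  lts :: nat
  lss :: 'q
  lrs :: "'r rv"
  lps :: "'p ptr"
  lt1 :: nat
  lo1 :: "'op opn"
  lp1 :: "'p ptr"
  lth :: nat
  lrh :: "'r rv"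
  ls1 :: 'q
  lr1 :: 'r

record ('p, 'op, 'q, 'r) config =
  cC :: nat
  cA :: "nat \<times> 'op opn \<times> 'p ptr"
  cS :: "nat \<times> 'q \<times> 'r rv \<times> 'p ptr"
  cH :: "'p \<Rightarrow> nat \<times> 'r rv"
  cL :: "'p \<Rightarrow> ('p, 'op, 'q, 'r) lstate"

definition deref :: "('p \<Rightarrow> nat \<times> 'r rv) \<Rightarrow> 'p ptr \<Rightarrow> nat \<times> 'r rv" where
  "deref H x = (case x of HNoop \<Rightarrow> (0, Bot) | HP q \<Rightarrow> H q)"

definition wr :: "('p \<Rightarrow> nat \<times> 'r rv) \<Rightarrow> 'p ptr \<Rightarrow> nat \<times> 'r rv \<Rightarrow> ('p \<Rightarrow> nat \<times> 'r rv)" where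
  "wr H x v = (case x of HNoop \<Rightarrow> H | HP q \<Rightarrow> H(q := v))"

text \<open>Events labelling atomic steps. EFI p t: process p's F&I at line 2 returned t.
EL12 p v b: process p executed the GCAS of line 12 with new value v, returning b.\<close>
datatype ('p, 'op, 'q, 'r) event =
    EInv 'p 'op
  | EFI 'p nat
  | EL12 'p "nat \<times> 'q \<times> 'r rv \<times> 'p ptr" bool
  | ERet 'p "'r rv"
  | ETau 'p nat

definition setL :: "('p, 'op, 'q, 'r) config \<Rightarrow> 'p \<Rightarrow> ('p, 'op, 'q, 'r) lstate \<Rightarrow> ('p, 'op, 'q, 'r) config" where
  "setL c p l = c\<lparr>cL := (cL c)(p := l)\<rparr>"

text \<open>One atomic step of process p (each numbered line is one atomic step).
applyT is the procedure apply_T.\<close>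
inductive ustep :: "('op \<Rightarrow> 'q \<Rightarrow> 'q \<times> 'r) \<Rightarrow> ('p, 'op, 'q, 'r) config
    \<Rightarrow> ('p, 'op, 'q, 'r) event \<Rightarrow> ('p, 'op, 'q, 'r) config \<Rightarrow> bool"
  for applyT where
  line1: "lpc (cL c p) = 1 \<Longrightarrow>
     ustep applyT c (EInv p o') (setL c p ((cL c p)\<lparr>lpc := 2, lop := o'\<rparr>))"
| line2: "lpc (cL c p) = 2 \<Longrightarrow>
     ustep applyT c (EFI p (cC c))
       ((setL c p ((cL c p)\<lparr>lpc := 3, lt := cC c\<rparr>))\<lparr>cC := Suc (cC c)\<rparr>)"
| line3: "lpc (cL c p) = 3 \<Longrightarrow>
     ustep applyT c (ETau p 3)
       ((setL c p ((cL c p)\<lparr>lpc := 4\<rparr>))\<lparr>cH := (cH c)(p := (lt (cL c p), NULL))\<rparr>)"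
| line4: "lpc (cL c p) = 4 \<Longrightarrow>
     ustep applyT c (ETau p 4)
       (setL c p ((cL c p)\<lparr>lpc := (if cH c p = (lt (cL c p), NULL) then 5 else 14)\<rparr>))"
| line5: "lpc (cL c p) = 5 \<Longrightarrow> cS c = (ts, ss, rs, ps) \<Longrightarrow>
     ustep applyT c (ETau p 5)
       (setL c p ((cL c p)\<lparr>lpc := 6, lts := ts, lss := ss, lrs := rs, lps := ps\<rparr>))"
| line6: "lpc (cL c p) = 6 \<Longrightarrow> l = cL c p \<Longrightarrow>
     ustep applyT c (ETau p 6)
       ((setL c p (l\<lparr>lpc := 7\<rparr>))\<lparr>cH :=
          (if deref (cH c) (lps l) = (lts l, NULL)
           then wr (cH c) (lps l) (lts l, lrs l) else cH c)\<rparr>)"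
| line7: "lpc (cL c p) = 7 \<Longrightarrow> l = cL c p \<Longrightarrow>
     ustep applyT c (ETau p 7)
       ((setL c p (l\<lparr>lpc := 8\<rparr>))\<lparr>cA :=
          (if fst (cA c) > lt l then (lt l, Op (lop l), HP p) else cA c)\<rparr>)"
| line8: "lpc (cL c p) = 8 \<Longrightarrow> cA c = (t1, o1, p1) \<Longrightarrow>
     ustep applyT c (ETau p 8)
       (setL c p ((cL c p)\<lparr>lpc := 9, lt1 := t1, lo1 := o1, lp1 := p1\<rparr>))"
| line9: "lpc (cL c p) = 9 \<Longrightarrow> deref (cH c) (lp1 (cL c p)) = (th, rh) \<Longrightarrow>
     ustep applyT c (ETau p 9)
       (setL c p ((cL c p)\<lparr>lpc := 10, lth := th, lrh := rh\<rparr>))"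
| line10: "lpc (cL c p) = 10 \<Longrightarrow> l = cL c p \<Longrightarrow>
     ustep applyT c (ETau p 10)
       (setL c p (l\<lparr>lpc := (if (lth l, lrh l) = (lt1 l, NULL) then 11 else 13)\<rparr>))"
| line11: "lpc (cL c p) = 11 \<Longrightarrow> lo1 (cL c p) = Op x \<Longrightarrow>
     applyT x (lss (cL c p)) = (s1, r1) \<Longrightarrow>
     ustep applyT c (ETau p 11)
       (setL c p ((cL c p)\<lparr>lpc := 12, ls1 := s1, lr1 := r1\<rparr>))"
| line12: "lpc (cL c p) = 12 \<Longrightarrow> l = cL c p \<Longrightarrow>
     v = (lt1 l, ls1 l, Res (lr1 l), lp1 l) \<Longrightarrow>
     b = (cS c = (lts l, lss l, lrs l, lps l)) \<Longrightarrow>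
     ustep applyT c (EL12 p v b)
       ((setL c p (l\<lparr>lpc := 4\<rparr>))\<lparr>cS := (if b then v else cS c)\<rparr>)"
| line13: "lpc (cL c p) = 13 \<Longrightarrow> l = cL c p \<Longrightarrow>
     ustep applyT c (ETau p 13)
       ((setL c p (l\<lparr>lpc := 4\<rparr>))\<lparr>cA :=
          (if cA c = (lt1 l, lo1 l, lp1 l) then (lt l, Op (lop l), HP p) else cA c)\<rparr>)"
| line14: "lpc (cL c p) = 14 \<Longrightarrow>
     ustep applyT c (ERet p (snd (cH c p))) (setL c p ((cL c p)\<lparr>lpc := 1\<rparr>))"

text \<open>Initial configurations (initial contents of the registers H_p and of the
local variables are arbitrary; every process is idle).\<close>
definition uinit :: "'q \<Rightarrow> ('p, 'op, 'q, 'r) config \<Rightarrow> bool" where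
  "uinit s0 c \<longleftrightarrow> cC c = 1 \<and> cA c = (0, NOOP, HNoop) \<and> cS c = (0, s0, Bot, HNoop)
     \<and> (\<forall>p. lpc (cL c p) = 1)"

text \<open>A (finite) execution: configurations cs!0, ..., cs!n and events es!0, ..., es!(n-1),
where es!i is the step from cs!i to cs!(i+1).\<close>
definition uexec :: "('op \<Rightarrow> 'q \<Rightarrow> 'q \<times> 'r) \<Rightarrow> 'q \<Rightarrow> ('p, 'op, 'q, 'r) config list
    \<Rightarrow> ('p, 'op, 'q, 'r) event list \<Rightarrow> bool" where
  "uexec applyT s0 cs es \<longleftrightarrow> length cs = Suc (length es) \<and> uinit s0 (cs ! 0)
     \<and> (\<forall>i < length es. ustep applyT (cs ! i) (es ! i) (cs ! Suc i))"

text \<open>The pair (t(o), h(o)) of an operation o of the execution: either the initial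
NOOP, i.e. (0, h(NOOP)), or an invocation by p whose F&I at line 2 returned t.\<close>
definition is_op :: "('p, 'op, 'q, 'r) event list \<Rightarrow> nat \<Rightarrow> 'p ptr \<Rightarrow> bool" where
  "is_op es t h \<longleftrightarrow> (t = 0 \<and> h = HNoop) \<or> (\<exists>k < length es. \<exists>p. es ! k = EFI p t \<and> h = HP p)"

end

theory Submission
  imports Defs
begin

text \<open>
  Let Ap be the set of pairs (t(o), h(o)) of the operations whose GCAS at line 12 has succeeded.
  Two facts about Ap are preserved by every step. First, an operation in Ap whose response is not
  yet recorded in h(o) is the one described by S: a GCAS at line 12 succeeds only if S is unchanged
  since the caller read it at line 5, and in between the caller recorded the response held by S in
  its H register at line 6. Second, h(o) is reset to (t(o), NULL) only at line 3 of o itself, before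
  o can be applied. A process whose GCAS at line 12 is about to succeed read (t(o), NULL) from h(o)
  at line 9 and still sees the S it read at line 5, so o is not in Ap: once o is applied, no later
  GCAS at line 12 for o succeeds.
\<close>

text \<open>No future execution of line 3 can write (t, NULL) into h: every F\&I of its owner that
  is still to come returns a value above t.\<close>

definition no_future_reset :: "('p, 'op, 'q, 'r) config \<Rightarrow> nat \<Rightarrow> 'p ptr \<Rightarrow> bool" where
  "no_future_reset c t h = (case h of HNoop \<Rightarrow> True | HP p \<Rightarrow> t < cC c \<and>
     (lpc (cL c p) = 1 \<or> lpc (cL c p) = 2 \<or>
      (t \<le> lt (cL c p) \<and> (lpc (cL c p) = 3 \<longrightarrow> t < lt (cL c p)))))"

text \<open>An operation o is identified by the pair (t(o), h(o)), which is how S and A refer to it.\<close>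

definition op_id :: "nat \<times> 'q \<times> 'r rv \<times> 'p ptr \<Rightarrow> nat \<times> 'p ptr" where
  "op_id S = (fst S, snd (snd (snd S)))"

definition snapshot :: "('p, 'op, 'q, 'r) lstate \<Rightarrow> nat \<times> 'q \<times> 'r rv \<times> 'p ptr" where
  "snapshot l = (lts l, lss l, lrs l, lps l)"

text \<open>The last clause is the heart of the proof: the operation that a process at line 12 would
  install in S has not been applied yet, as long as S is the value read at line 5.\<close>

definition local_inv ::
    "(nat \<times> 'p ptr) set \<Rightarrow> ('p, 'op, 'q, 'r) config \<Rightarrow> ('p, 'op, 'q, 'r) lstate \<Rightarrow> bool" where
  "local_inv Ap c l \<longleftrightarrow>
    (3 \<le> lpc l \<and> lpc l \<le> 14 \<longrightarrow> lt l < cC c) \<and>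
    (6 \<le> lpc l \<and> lpc l \<le> 12 \<longrightarrow> lrs l \<noteq> NULL \<and> (lts l, lps l) \<in> insert (0, HNoop) Ap) \<and>
    (9 \<le> lpc l \<and> lpc l \<le> 12 \<longrightarrow> no_future_reset c (lt1 l) (lp1 l)) \<and>
    (10 \<le> lpc l \<and> lpc l \<le> 12 \<longrightarrow> lp1 l = HNoop \<longrightarrow> (lth l, lrh l) = (0, Bot)) \<and>
    ((lpc l = 11 \<or> lpc l = 12) \<longrightarrow> (lth l, lrh l) = (lt1 l, NULL)) \<and>
    (7 \<le> lpc l \<and> lpc l \<le> 12 \<longrightarrow> snapshot l = cS c \<longrightarrow>
       deref (cH c) (lps l) \<noteq> (lts l, NULL)) \<and>
    (10 \<le> lpc l \<and> lpc l \<le> 12 \<longrightarrow> (lth l, lrh l) = (lt1 l, NULL) \<longrightarrow> snapshot l = cS c \<longrightarrow>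
       (lt1 l, lp1 l) \<notin> Ap)"

text \<open>The last clause: every applied operation, except possibly the one described by S, has its
  response recorded in its H register.\<close>

definition global_inv :: "(nat \<times> 'p ptr) set \<Rightarrow> ('p, 'op, 'q, 'r) config \<Rightarrow> bool" where
  "global_inv Ap c \<longleftrightarrow>
    fst (snd (snd (cS c))) \<noteq> NULL \<and>
    op_id (cS c) \<in> insert (0, HNoop) Ap \<and>
    no_future_reset c (fst (cA c)) (snd (snd (cA c))) \<and>
    (\<forall>(t, x) \<in> Ap. no_future_reset c t x) \<and>
    (\<forall>(t, x) \<in> Ap. deref (cH c) x \<noteq> (t, NULL) \<or> op_id (cS c) = (t, x))"

definition invariant :: "(nat \<times> 'p ptr) set \<Rightarrow> ('p, 'op, 'q, 'r) config \<Rightarrow> bool" where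
  "invariant Ap c \<longleftrightarrow> global_inv Ap c \<and> (\<forall>q. local_inv Ap c (cL c q))"

lemma setL_simps [simp]:
  "cL (setL c p l) = (cL c)(p := l)" "cC (setL c p l) = cC c" "cA (setL c p l) = cA c"
  "cS (setL c p l) = cS c" "cH (setL c p l) = cH c"
  by (simp_all add: setL_def)

lemma deref_HNoop [simp]: "deref H HNoop = (0, Bot)"
  by (simp add: deref_def)

lemma deref_wr: "deref (wr H y v) x = (if x = y \<and> y \<noteq> HNoop then v else deref H x)"
  by (auto simp: deref_def wr_def split: ptr.splits)

lemma deref_fun_upd: "deref (H(p := v)) x = (if x = HP p then v else deref H x)"
  by (auto simp: deref_def split: ptr.splits)

lemma op_id_snapshot [simp]: "op_id (snapshot l) = (lts l, lps l)"
  by (simp add: op_id_def snapshot_def)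

lemma ustep_counter_mono: "ustep applyT c e c' \<Longrightarrow> cC c \<le> cC c'"
  by (erule ustep.cases) auto

lemma no_future_reset_step:
  "ustep applyT c e c' \<Longrightarrow> no_future_reset c t h \<Longrightarrow> no_future_reset c' t h"
  by (cases h; erule ustep.cases; auto simp: no_future_reset_def setL_def)

lemma applied_unrecorded_is_latest:
  assumes "global_inv Ap c" "(t, x) \<in> Ap" "deref (cH c) x = (t, NULL)"
  shows "op_id (cS c) = (t, x)"
  using assms unfolding global_inv_def by fastforce

lemma pending_not_applied:
  assumes "local_inv Ap c l" "lpc l = 12" "snapshot l = cS c"
  shows "(lt1 l, lp1 l) \<notin> Ap"
  using assms unfolding local_inv_def by simp

lemma local_inv_transfer:
  assumes "local_inv Ap c l" "cC c \<le> cC c'" "cS c' = cS c"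
    and "\<And>t x. no_future_reset c t x \<Longrightarrow> no_future_reset c' t x"
    and "\<And>t x. (t, x) \<in> insert (0, HNoop) Ap \<Longrightarrow> deref (cH c) x \<noteq> (t, NULL) \<Longrightarrow>
           deref (cH c') x \<noteq> (t, NULL)"
  shows "local_inv Ap c' l"
  using assms(1) unfolding local_inv_def assms(3)
  by (elim conjE, intro conjI impI) (use assms(2,4,5) in \<open>auto\<close>)

lemma invariant_update:
  assumes step: "ustep applyT c e c'" and inv: "invariant Ap c"
    and S_same: "cS c' = cS c"
    and H_recorded: "\<And>t x. (t, x) \<in> insert (0, HNoop) Ap \<Longrightarrow>
           deref (cH c) x \<noteq> (t, NULL) \<Longrightarrow> deref (cH c') x \<noteq> (t, NULL)"
    and A_valid: "cA c' = cA c \<or> no_future_reset c' (fst (cA c')) (snd (snd (cA c')))"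
    and L_other: "\<And>q. q \<noteq> p \<Longrightarrow> cL c' q = cL c q"
    and L_own: "local_inv Ap c' (cL c' p)"
  shows "invariant Ap c'"
proof -
  have V: "no_future_reset c' t x" if "no_future_reset c t x" for t x
    using no_future_reset_step[OF step that] .
  have C: "cC c \<le> cC c'" using ustep_counter_mono[OF step] .
  have G: "global_inv Ap c" using inv by (simp add: invariant_def)
  have "global_inv Ap c'"
    unfolding global_inv_def S_same
  proof (intro conjI ballI)
    show "fst (snd (snd (cS c))) \<noteq> NULL" "op_id (cS c) \<in> insert (0, HNoop) Ap"
      using G by (simp_all add: global_inv_def)
    show "no_future_reset c' (fst (cA c')) (snd (snd (cA c')))"
      using A_valid G V by (auto simp: global_inv_def)
  next
    fix y assume "y \<in> Ap"
    moreover obtain t x where y: "y = (t, x)" by fastforce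
    ultimately have "(t, x) \<in> Ap" by simp
    then show "case y of (t, x) \<Rightarrow> no_future_reset c' t x"
      and "case y of (t, x) \<Rightarrow> deref (cH c') x \<noteq> (t, NULL) \<or> op_id (cS c) = (t, x)"
      using G V H_recorded[of t x] y unfolding global_inv_def by auto
  qed
  moreover have "local_inv Ap c' (cL c q)" if "q \<noteq> p" for q
    using local_inv_transfer[OF _ C S_same V H_recorded] inv by (simp add: invariant_def)
  ultimately show ?thesis using L_own L_other unfolding invariant_def by metis
qed

lemma reset_keeps_applied_recorded:
  assumes "global_inv Ap c" "lpc (cL c p) = 3" "(t, x) \<in> insert (0, HNoop) Ap"
    and "deref (cH c) x \<noteq> (t, NULL)"
  shows "deref ((cH c)(p := (lt (cL c p), NULL))) x \<noteq> (t, NULL)"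
proof (cases "x = HP p")
  case True
  then have "no_future_reset c t x" using assms(1,3) by (auto simp: global_inv_def)
  then show ?thesis using True assms(2) by (simp add: no_future_reset_def deref_fun_upd)
qed (use assms(4) in \<open>simp add: deref_fun_upd\<close>)

lemma applied_recorded_while_snapshot_current:
  assumes "global_inv Ap c" "local_inv Ap c l" "7 \<le> lpc l" "lpc l \<le> 12" "snapshot l = cS c"
    and "(t, x) \<in> Ap"
  shows "deref (cH c) x \<noteq> (t, NULL)"
proof
  assume unrecorded: "deref (cH c) x = (t, NULL)"
  with assms(1,6) have "op_id (cS c) = (t, x)" by (intro applied_unrecorded_is_latest)
  then have "(t, x) = (lts l, lps l)" using op_id_snapshot[of l] assms(5) by simp
  moreover have "deref (cH c) (lps l) \<noteq> (lts l, NULL)"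
    using assms(2-5) by (simp add: local_inv_def)
  ultimately show False using unrecorded by simp
qed

lemma invariant_step_other:
  assumes step: "ustep applyT c e c'" and inv: "invariant Ap c"
    and no_success: "\<And>p v. e \<noteq> EL12 p v True"
  shows "invariant Ap c'"
proof -
  have V: "no_future_reset c' t x" if "no_future_reset c t x" for t x
    using no_future_reset_step[OF step that] .
  have G: "global_inv Ap c" and L: "\<And>q. local_inv Ap c (cL c q)"
    using inv by (simp_all add: invariant_def)
  from step show ?thesis
  proof cases
    case (line1 p o')
    show ?thesis
      by (rule invariant_update[OF step inv, of p]) (use line1 L in \<open>auto simp: local_inv_def\<close>)
  next
    case (line2 p)
    show ?thesis
      by (rule invariant_update[OF step inv, of p]) (use line2 L in \<open>auto simp: local_inv_def\<close>)
  next
    case (line3 p)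
    have recorded: "deref (cH c') x \<noteq> (t, NULL)"
      if "(t, x) \<in> insert (0, HNoop) Ap" "deref (cH c) x \<noteq> (t, NULL)" for t x
      using reset_keeps_applied_recorded[OF G line3(3) that] line3(2) by simp
    show ?thesis
      by (rule invariant_update[OF step inv _ recorded, of p])
        (use line3 L in \<open>auto simp: local_inv_def\<close>)
  next
    case (line4 p)
    show ?thesis
      by (rule invariant_update[OF step inv, of p]) (use line4 L in \<open>auto simp: local_inv_def\<close>)
  next
    case (line5 p ts ss rs ps)
    show ?thesis
      by (rule invariant_update[OF step inv, of p])
        (use line5 L G in \<open>auto simp: local_inv_def global_inv_def op_id_def\<close>)
  next
    case (line6 p l)
    show ?thesis
      by (rule invariant_update[OF step inv, of p])
        (use line6 L in \<open>auto simp: local_inv_def snapshot_def deref_wr\<close>)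
  next
    case (line7 p l)
    show ?thesis
      by (rule invariant_update[OF step inv, of p])
        (use line7 L in \<open>auto simp: local_inv_def snapshot_def no_future_reset_def\<close>)
  next
    case (line8 p t1 o1 p1)
    show ?thesis
      by (rule invariant_update[OF step inv, of p])
        (use line8 L G V in \<open>auto simp: local_inv_def global_inv_def snapshot_def\<close>)
  next
    case (line9 p th rh)
    have not_applied: "(lt1 (cL c p), lp1 (cL c p)) \<notin> Ap"
      if "(th, rh) = (lt1 (cL c p), NULL)" "snapshot (cL c p) = cS c"
      using applied_recorded_while_snapshot_current[OF G L[of p] _ _ that(2)] line9 that(1)
      by auto
    show ?thesis
      by (rule invariant_update[OF step inv, of p])
        (use line9 L V not_applied in \<open>auto simp: local_inv_def snapshot_def\<close>)
  next
    case (line10 p l)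
    show ?thesis
      by (rule invariant_update[OF step inv, of p])
        (use line10 L V in \<open>auto simp: local_inv_def snapshot_def HOL.induct_conj_def\<close>)
  next
    case (line11 p x s1 r1)
    show ?thesis
      by (rule invariant_update[OF step inv, of p])
        (use line11 L V in \<open>auto simp: local_inv_def snapshot_def\<close>)
  next
    case (line12 p l v b)
    show ?thesis
      by (rule invariant_update[OF step inv, of p])
        (use line12 L no_success in \<open>auto simp: local_inv_def snapshot_def\<close>)
  next
    case (line13 p l)
    show ?thesis
      by (rule invariant_update[OF step inv, of p])
        (use line13 L in \<open>auto simp: local_inv_def snapshot_def no_future_reset_def\<close>)
  next
    case (line14 p)
    show ?thesis
      by (rule invariant_update[OF step inv, of p]) (use line14 L in \<open>auto simp: local_inv_def\<close>)
  qed
qed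

lemma local_inv_after_success:
  assumes "local_inv Ap c l" "op_id v \<notin> insert (0, HNoop) Ap"
    and "cC c' = cC c" "cH c' = cH c" "cS c' = v"
    and "\<And>t x. no_future_reset c t x \<Longrightarrow> no_future_reset c' t x"
  shows "local_inv (insert (op_id v) Ap) c' l"
proof -
  have "snapshot l \<noteq> v" if "6 \<le> lpc l" "lpc l \<le> 12"
    using assms(1,2) that op_id_snapshot[of l] unfolding local_inv_def by auto
  then show ?thesis
    using assms(1) unfolding local_inv_def assms(3-5)
    by (elim conjE, intro conjI impI) (use assms(6) in \<open>auto\<close>)
qed

lemma invariant_step_success:
  assumes step: "ustep applyT c (EL12 p v True) c'" and inv: "invariant Ap c"
  shows "invariant (insert (op_id v) Ap) c'"
  using step
proof cases
  case (line12 l)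
  have G: "global_inv Ap c" and L: "\<And>q. local_inv Ap c (cL c q)"
    using inv by (simp_all add: invariant_def)
  have V: "no_future_reset c' t x" if "no_future_reset c t x" for t x
    using no_future_reset_step[OF step that] .
  have Lp: "local_inv Ap c l" and pc: "lpc l = 12" and S: "cS c = snapshot l"
    using L line12 by (simp_all add: snapshot_def)
  have v: "op_id v = (lt1 l, lp1 l)" using line12 by (simp add: op_id_def)
  have "(lt1 l, lp1 l) \<notin> Ap" using pending_not_applied[OF Lp pc S[symmetric]] .
  moreover have "lp1 l \<noteq> HNoop" using Lp pc by (auto simp: local_inv_def)
  ultimately have fresh: "op_id v \<notin> insert (0, HNoop) Ap" using v by simp
  have recorded: "deref (cH c) x \<noteq> (t, NULL)" if "(t, x) \<in> Ap" for t x
    using applied_recorded_while_snapshot_current[OF G Lp _ _ S[symmetric] that] pc by simp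
  have "global_inv (insert (op_id v) Ap) c'"
    unfolding global_inv_def
  proof (intro conjI ballI)
    show "fst (snd (snd (cS c'))) \<noteq> NULL"
      and "op_id (cS c') \<in> insert (0, HNoop) (insert (op_id v) Ap)"
      using line12 by simp_all
    show "no_future_reset c' (fst (cA c')) (snd (snd (cA c')))"
      using G V line12 by (simp add: global_inv_def)
  next
    fix y assume y: "y \<in> insert (op_id v) Ap"
    obtain t x where tx: "y = (t, x)" by fastforce
    have "no_future_reset c (lt1 l) (lp1 l)" using Lp pc by (simp add: local_inv_def)
    then show "case y of (t, x) \<Rightarrow> no_future_reset c' t x"
      using y tx G V v unfolding global_inv_def by auto
    show "case y of (t, x) \<Rightarrow> deref (cH c') x \<noteq> (t, NULL) \<or> op_id (cS c') = (t, x)"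
      using y tx recorded line12 by auto
  qed
  moreover have "local_inv (insert (op_id v) Ap) c' (cL c' q)" for q
  proof (cases "q = p")
    case True
    then show ?thesis using Lp pc line12 by (simp add: local_inv_def)
  next
    case False
    then show ?thesis using local_inv_after_success[OF L fresh _ _ _ V] line12 by simp
  qed
  ultimately show ?thesis by (simp add: invariant_def)
qed

definition applied_by :: "('p, 'op, 'q, 'r) event \<Rightarrow> (nat \<times> 'p ptr) set" where
  "applied_by e = (case e of EL12 p v True \<Rightarrow> {op_id v} | _ \<Rightarrow> {})"

lemma invariant_step:
  assumes "ustep applyT c e c'" "invariant Ap c"
  shows "invariant (Ap \<union> applied_by e) c'"
proof (cases "\<exists>p v. e = EL12 p v True")
  case True
  then obtain p v where "e = EL12 p v True" by blast
  then show ?thesis using invariant_step_success assms by (simp add: applied_by_def)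
next
  case False
  then have "applied_by e = {}" by (auto simp: applied_by_def split: event.split bool.split)
  moreover have "invariant Ap c'" using invariant_step_other[OF assms] False by blast
  ultimately show ?thesis by simp
qed

definition applied :: "('p, 'op, 'q, 'r) event list \<Rightarrow> nat \<Rightarrow> (nat \<times> 'p ptr) set" where
  "applied es n = (\<Union>k<n. applied_by (es ! k))"

lemma invariant_init: "uinit s0 c \<Longrightarrow> invariant {} c"
  by (simp add: uinit_def invariant_def global_inv_def local_inv_def op_id_def no_future_reset_def)

lemma invariant_reachable:
  assumes "uexec applyT s0 cs es" "n \<le> length es"
  shows "invariant (applied es n) (cs ! n)"
  using assms(2)
proof (induction n)
  case 0
  have "uinit s0 (cs ! 0)" using assms(1) by (simp add: uexec_def)
  then show ?case by (simp add: applied_def invariant_init)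
next
  case (Suc n)
  then have "ustep applyT (cs ! n) (es ! n) (cs ! Suc n)" using assms(1) by (simp add: uexec_def)
  moreover have "applied es (Suc n) = applied es n \<union> applied_by (es ! n)"
    by (auto simp: applied_def lessThan_Suc)
  ultimately show ?case using Suc invariant_step by simp
qed

theorem mainTheorem12:
  fixes delta :: "('q \<times> 'op \<times> 'q \<times> 'r) set" and s0 :: 'q
    and applyT :: "'op \<Rightarrow> 'q \<Rightarrow> 'q \<times> 'r"
    and cs :: "('p, 'op, 'q, 'r) config list" and es :: "('p, 'op, 'q, 'r) event list"
  assumes "\<forall>o' s. (s, o', fst (applyT o' s), snd (applyT o' s)) \<in> delta"
    and "uexec applyT s0 cs es"
    and "is_op es t h"
    and "i < j" and "j < length es"
    and "es ! i = EL12 p (t, s, r, h) True"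
    and "es ! j = EL12 p' (t, s', r', h) b"
  shows "\<not> b"
proof
  assume b
  have applied_ij: "(t, h) \<in> applied es j"
    using assms(4,6) by (force simp: applied_def applied_by_def op_id_def)
  have inv: "invariant (applied es j) (cs ! j)"
    using invariant_reachable[OF assms(2)] assms(5) by simp
  have "ustep applyT (cs ! j) (EL12 p' (t, s', r', h) b) (cs ! Suc j)"
    using assms(2,5,7) unfolding uexec_def by metis
  then show False
  proof cases
    case (line12 l)
    then have "(t, h) \<notin> applied es j"
      using pending_not_applied[of "applied es j" "cs ! j" l] inv \<open>b\<close>
      by (simp add: invariant_def snapshot_def)
    then show False using applied_ij by contradiction
  qed
qed

end
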